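(* There exists a compact Hausdorff space $Y$ such that $\mathrm{K}_1^w(\mathbb R,Y)\setminus \mathrm{H}_1(\mathbb R,Y)\neq\emptyset$.
   Context: $\mathrm{H}_1(X,Y)$: mappings $f:X\to Y$ with $f^{-1}(V)$ an $F_\sigma$-set for every open $V\subseteq Y$. $\mathrm{K}_1^w(X,Y)$: mappings $f:X\to Y$ with $f^{-1}(V)$ a countable union of functionally closed subsets of $X$ for every functionally open $V\subseteq Y$ (functionally closed = zero set of a continuous real function; functionally open = complement of such). *)

theory Defs
  imports "HOL-Analysis.Analysis"
begin

definition functionally_closedin :: "'a topology \<Rightarrow> 'a set \<Rightarrow> bool" where
  "functionally_closedin X S \<longleftrightarrow>
     (\<exists>g. continuous_map X euclideanreal g \<and> S = {x \<in> topspace X. g x = 0})"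

definition functionally_openin :: "'a topology \<Rightarrow> 'a set \<Rightarrow> bool" where
  "functionally_openin X U \<longleftrightarrow>
     U \<subseteq> topspace X \<and> functionally_closedin X (topspace X - U)"

definition H1 :: "'a topology \<Rightarrow> 'b topology \<Rightarrow> ('a \<Rightarrow> 'b) set" where
  "H1 X Y = {f. (\<forall>x\<in>topspace X. f x \<in> topspace Y) \<and>
      (\<forall>V. openin Y V \<longrightarrow> fsigma_in X {x \<in> topspace X. f x \<in> V})}"

definition K1w :: "'a topology \<Rightarrow> 'b topology \<Rightarrow> ('a \<Rightarrow> 'b) set" where
  "K1w X Y = {f. (\<forall>x\<in>topspace X. f x \<in> topspace Y) \<and>
      (\<forall>V. functionally_openin Y V \<longrightarrow>
         (\<exists>F :: nat \<Rightarrow> 'a set. (\<forall>n. functionally_closedin X (F n)) \<and>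
             {x \<in> topspace X. f x \<in> V} = (\<Union>n. F n)))}"

end

theory Submission
  imports Defs
begin

text \<open>Take for \<open>Y\<close> the one-point compactification of a discrete copy of \<open>\<real>\<close> and let
  \<open>f : \<real> \<rightarrow> Y\<close> be the inclusion. Every subset of the discrete part is open in \<open>Y\<close>, so
  \<open>f \<in> H\<^sub>1\<close> would force every set of reals, in particular the irrationals, to be
  \<open>F\<^sub>\<sigma>\<close>, contradicting Baire's theorem. On the other hand a functionally open set of \<open>Y\<close>
  is either a cozero set of a function vanishing at infinity, hence countable, or a
  cofinite neighbourhood of infinity; its preimage is therefore countable or open,
  thus \<open>F\<^sub>\<sigma>\<close>, and in a metric space \<open>F\<^sub>\<sigma>\<close> sets are countable unions of zero sets.\<close>

lemma functionally_closedin_closed: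
  assumes "closed (C :: 'a::metric_space set)"
  shows "functionally_closedin euclidean C"
proof (cases "C = {}")
  case True
  then show ?thesis
    unfolding functionally_closedin_def by (intro exI[of _ "\<lambda>_. 1"]) auto
next
  case False
  then show ?thesis
    unfolding functionally_closedin_def
    using in_closed_iff_infdist_zero[OF assms False]
    by (intro exI[of _ "\<lambda>x. infdist x C"]) (auto intro!: continuous_intros)
qed

lemma fsigma_in_imp_Union_functionally_closedin:
  fixes S :: "'a::metric_space set"
  assumes "fsigma_in euclidean S"
  obtains F :: "nat \<Rightarrow> 'a set"
  where "\<And>n. functionally_closedin euclidean (F n)" "S = (\<Union>n. F n)"
proof -
  obtain C :: "nat \<Rightarrow> 'a set" where "\<And>n. closedin euclidean (C n)" "(\<Union>n. C n) = S"
    using fsigma_in_ascending[THEN iffD1, OF assms] by blast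
  then show thesis
    using that[of C] functionally_closedin_closed by auto
qed

lemma countable_imp_fsigma_in:
  assumes "countable (S :: 'a::t1_space set)"
  shows "fsigma_in euclidean S"
proof -
  have "fsigma_in euclidean (\<Union>x\<in>S. {x})"
    by (rule fsigma_in_Union) (auto intro: closed_imp_fsigma_in simp: assms)
  then show ?thesis by simp
qed

lemma irrationals_not_fsigma_in: "\<not> fsigma_in euclidean (- \<rat> :: real set)"
proof
  assume "fsigma_in euclidean (- \<rat> :: real set)"
  then obtain C :: "nat \<Rightarrow> real set"
    where "\<And>n. closedin euclidean (C n)" and irr: "(\<Union>n. C n) = - \<rat>"
    by (metis fsigma_in_ascending)
  then have closed: "closed (C n)" for n
    by simp
  have "interior (C n) = {}" for n
  proof -
    have "interior (C n) \<inter> closure \<rat> = {}"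
      using irr interior_subset[of "C n"] by (auto simp: open_Int_closure_eq_empty)
    then show ?thesis by (simp add: Rats_closure_real)
  qed
  then have dense_complement: "closure (- C n) = UNIV" for n
    by (simp add: closure_complement)
  \<comment> \<open>Baire: the dense open sets \<open>- C n\<close> and \<open>- {q}\<close>, \<open>q \<in> \<rat>\<close>, have empty intersection.\<close>
  define \<G> where "\<G> = range (\<lambda>n. - C n) \<union> (\<lambda>q. - {q}) ` \<rat>"
  have "countable \<G>"
    unfolding \<G>_def by (auto intro: countable_rat)
  moreover have "openin (top_of_set UNIV) T \<and> UNIV \<subseteq> closure T" if "T \<in> \<G>" for T
    using that closed dense_complement
    by (auto simp: \<G>_def open_Compl closure_complement)
  ultimately have "UNIV \<subseteq> closure (\<Inter>\<G>)"
    by (intro Baire) auto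
  moreover have "x \<notin> \<Inter>\<G>" for x
  proof (cases "x \<in> \<rat>")
    case False
    then obtain n where "x \<in> C n"
      using irr by auto
    then show ?thesis by (auto simp: \<G>_def)
  qed (auto simp: \<G>_def)
  then have "\<Inter>\<G> = {}" by blast
  ultimately show False by simp
qed

text \<open>The one-point compactification of the discrete space \<open>S\<close>, with \<open>p\<close> as the point at
  infinity; it is only meaningful (and Hausdorff) when \<open>p \<notin> S\<close>.\<close>

definition alexandroff_discrete :: "'a set \<Rightarrow> 'a \<Rightarrow> 'a topology" where
  "alexandroff_discrete S p = topology (\<lambda>U. U \<subseteq> insert p S \<and> (p \<in> U \<longrightarrow> finite (S - U)))"

lemma istopology_alexandroff_discrete:
  "istopology (\<lambda>U. U \<subseteq> insert p S \<and> (p \<in> U \<longrightarrow> finite (S - U)))"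
  unfolding istopology_def
proof (rule conjI; intro allI impI)
  fix U V :: "'a set"
  assume "U \<subseteq> insert p S \<and> (p \<in> U \<longrightarrow> finite (S - U))"
    and "V \<subseteq> insert p S \<and> (p \<in> V \<longrightarrow> finite (S - V))"
  then show "U \<inter> V \<subseteq> insert p S \<and> (p \<in> U \<inter> V \<longrightarrow> finite (S - U \<inter> V))"
    by (auto simp: Diff_Int)
next
  fix \<K> :: "'a set set"
  assume \<K>: "\<forall>K\<in>\<K>. K \<subseteq> insert p S \<and> (p \<in> K \<longrightarrow> finite (S - K))"
  show "\<Union>\<K> \<subseteq> insert p S \<and> (p \<in> \<Union>\<K> \<longrightarrow> finite (S - \<Union>\<K>))"
  proof (intro conjI impI)
    assume "p \<in> \<Union>\<K>"
    then obtain K where "K \<in> \<K>" "p \<in> K" by blast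
    then show "finite (S - \<Union>\<K>)"
      using \<K> by (blast intro: finite_subset[of _ "S - K"])
  qed (use \<K> in blast)
qed

lemma openin_alexandroff_discrete:
  "openin (alexandroff_discrete S p) U \<longleftrightarrow> U \<subseteq> insert p S \<and> (p \<in> U \<longrightarrow> finite (S - U))"
  by (simp add: alexandroff_discrete_def istopology_alexandroff_discrete)

lemma topspace_alexandroff_discrete: "topspace (alexandroff_discrete S p) = insert p S"
proof (rule subset_antisym)
  show "topspace (alexandroff_discrete S p) \<subseteq> insert p S"
    using openin_topspace[of "alexandroff_discrete S p"]
    unfolding openin_alexandroff_discrete by blast
  show "insert p S \<subseteq> topspace (alexandroff_discrete S p)"
    by (rule openin_subset) (simp add: openin_alexandroff_discrete)
qed

lemma finite_closedin_alexandroff_discrete: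
  assumes "closedin (alexandroff_discrete S p) C" "p \<notin> C"
  shows "finite C"
proof -
  have "finite (S - (insert p S - C))"
    using assms openin_diff[OF openin_topspace assms(1)]
    by (simp add: openin_alexandroff_discrete topspace_alexandroff_discrete)
  moreover have "C \<subseteq> S - (insert p S - C)"
    using assms closedin_subset by (fastforce simp: topspace_alexandroff_discrete)
  ultimately show ?thesis by (rule finite_subset[rotated])
qed

lemma compact_space_alexandroff_discrete: "compact_space (alexandroff_discrete S p)"
  unfolding compact_space_def compactin_def topspace_alexandroff_discrete
proof (intro conjI allI impI)
  fix \<U> assume \<U>: "(\<forall>U\<in>\<U>. openin (alexandroff_discrete S p) U) \<and> insert p S \<subseteq> \<Union>\<U>"
  then obtain U\<^sub>0 where U\<^sub>0: "U\<^sub>0 \<in> \<U>" "p \<in> U\<^sub>0" by auto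
  then have "finite (S - U\<^sub>0)"
    using \<U> by (auto simp: openin_alexandroff_discrete)
  moreover have "\<forall>y\<in>S - U\<^sub>0. \<exists>U\<in>\<U>. y \<in> U"
    using \<U> by blast
  then obtain h where h: "\<And>y. y \<in> S - U\<^sub>0 \<Longrightarrow> h y \<in> \<U> \<and> y \<in> h y"
    by metis
  ultimately show "\<exists>\<F>. finite \<F> \<and> \<F> \<subseteq> \<U> \<and> insert p S \<subseteq> \<Union>\<F>"
    using U\<^sub>0 by (intro exI[of _ "insert U\<^sub>0 (h ` (S - U\<^sub>0))"]) blast
qed auto

lemma Hausdorff_space_alexandroff_discrete:
  assumes "p \<notin> S"
  shows "Hausdorff_space (alexandroff_discrete S p)"
proof -
  have separated: "\<exists>U V. openin (alexandroff_discrete S p) U \<and> openin (alexandroff_discrete S p) V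
      \<and> x \<in> U \<and> y \<in> V \<and> disjnt U V"
    if "x \<in> S" "y \<in> insert p S" "x \<noteq> y" for x y
  proof (intro exI conjI)
    show "openin (alexandroff_discrete S p) {x}"
      using that assms by (auto simp: openin_alexandroff_discrete)
    show "openin (alexandroff_discrete S p) (insert p S - {x})"
      using that assms by (auto simp: openin_alexandroff_discrete intro: finite_subset[of _ "{x}"])
  qed (use that in \<open>auto simp: disjnt_def\<close>)
  show ?thesis
    unfolding Hausdorff_space_def topspace_alexandroff_discrete
    by (metis disjnt_sym insertE separated)
qed

lemma countable_cozero_alexandroff_discrete:
  assumes g: "continuous_map (alexandroff_discrete S p) euclideanreal g" and "g p = 0"
  shows "countable {x \<in> S. g x \<noteq> 0}"
proof -
  define A where "A n = {x \<in> insert p S. 1 / (real n + 1) \<le> \<bar>g x\<bar>}" for n :: nat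
  have A_closed: "closedin (alexandroff_discrete S p) (A n)" for n
  proof -
    have "closed {t. 1 / (real n + 1) \<le> \<bar>t\<bar>}"
      by (intro closed_Collect_le continuous_on_const continuous_on_rabs continuous_on_id)
    then have "closedin (alexandroff_discrete S p)
        {x \<in> topspace (alexandroff_discrete S p). g x \<in> {t. 1 / (real n + 1) \<le> \<bar>t\<bar>}}"
      by (intro closedin_continuous_map_preimage[OF g]) auto
    then show ?thesis
      by (simp add: A_def topspace_alexandroff_discrete)
  qed
  have "p \<notin> A n" for n
    using \<open>g p = 0\<close> by (simp add: A_def)
  then have "finite (A n)" for n
    using A_closed by (rule finite_closedin_alexandroff_discrete[rotated])
  moreover have "{x \<in> S. g x \<noteq> 0} \<subseteq> (\<Union>n. A n)"
  proof
    fix x assume x: "x \<in> {x \<in> S. g x \<noteq> 0}"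
    then obtain n where "1 / (real n + 1) < \<bar>g x\<bar>"
      by (metis (mono_tags) mem_Collect_eq add.commute of_nat_Suc zero_less_abs_iff nat_approx_posE)
    with x have "x \<in> A n"
      by (simp add: A_def)
    then show "x \<in> (\<Union>n. A n)" by blast
  qed
  ultimately show ?thesis
    by (meson countable_UN countable_finite countable_subset UNIV_I countableI_type)
qed

lemma K1w_alexandroff_discrete:
  fixes f :: "'a::metric_space \<Rightarrow> 'b"
  assumes "inj f" "range f \<subseteq> insert p S"
  shows "f \<in> K1w euclidean (alexandroff_discrete S p)"
  unfolding K1w_def
proof (intro CollectI conjI allI impI ballI)
  show "f x \<in> topspace (alexandroff_discrete S p)" for x
    using assms by (auto simp: topspace_alexandroff_discrete)
next
  fix V assume "functionally_openin (alexandroff_discrete S p) V"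
  then obtain g where "V \<subseteq> insert p S"
      and g: "continuous_map (alexandroff_discrete S p) euclideanreal g"
      and "insert p S - V = {y \<in> insert p S. g y = 0}"
    unfolding functionally_openin_def functionally_closedin_def topspace_alexandroff_discrete
    by auto
  then have V: "V = {y \<in> insert p S. g y \<noteq> 0}" by blast
  have "fsigma_in euclidean (f -` V)"
  proof (cases "p \<in> V")
    case True
    have "openin (alexandroff_discrete S p) {y \<in> topspace (alexandroff_discrete S p). g y \<in> - {0}}"
      by (rule openin_continuous_map_preimage[OF g]) auto
    then have "openin (alexandroff_discrete S p) V"
      by (simp add: V topspace_alexandroff_discrete)
    with True have "finite (f -` (S - V))"
      using \<open>inj f\<close> by (simp add: openin_alexandroff_discrete finite_vimageI)
    moreover have "- (f -` V) = f -` (S - V)"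
      using True assms(2) by auto
    ultimately have "open (f -` V)"
      by (metis finite_imp_closed open_closed double_complement)
    then show ?thesis
      by (simp add: open_imp_fsigma_in metrizable_space_euclidean)
  next
    case False
    then have "g p = 0" "V = {x \<in> S. g x \<noteq> 0}"
      using V by blast+
    then have "countable V"
      using countable_cozero_alexandroff_discrete[OF g] by simp
    then have "countable (f ` f -` V)"
      by (rule countable_subset[OF image_vimage_subset])
    then have "countable (f -` V)"
      using inj_on_subset[OF \<open>inj f\<close> subset_UNIV] by (rule countable_image_inj_on)
    then show ?thesis
      by (rule countable_imp_fsigma_in)
  qed
  then obtain F :: "nat \<Rightarrow> 'a set"
    where "\<And>n. functionally_closedin euclidean (F n)" "f -` V = (\<Union>n. F n)"
    by (rule fsigma_in_imp_Union_functionally_closedin) blast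
  then show "\<exists>F :: nat \<Rightarrow> 'a set. (\<forall>n. functionally_closedin euclidean (F n)) \<and>
      {x \<in> topspace euclidean. f x \<in> V} = (\<Union>n. F n)"
    by (intro exI[of _ F]) (auto simp: vimage_def)
qed

lemma H1_alexandroff_discrete_imp_fsigma_in:
  assumes "f \<in> H1 X (alexandroff_discrete S p)" "inj_on f (topspace X)"
    and "f ` topspace X \<subseteq> S" "p \<notin> S" "A \<subseteq> topspace X"
  shows "fsigma_in X A"
proof -
  have "openin (alexandroff_discrete S p) (f ` A)"
    using assms by (auto simp: openin_alexandroff_discrete)
  then have "fsigma_in X {x \<in> topspace X. f x \<in> f ` A}"
    using assms(1) by (simp add: H1_def)
  moreover have "{x \<in> topspace X. f x \<in> f ` A} = A"
    using assms by (auto dest: inj_onD)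
  ultimately show ?thesis by simp
qed

theorem mainTheorem3:
  "\<exists>Y :: (real set \<Rightarrow> real) topology.
     compact_space Y \<and> Hausdorff_space Y \<and>
     K1w euclideanreal Y - H1 euclideanreal Y \<noteq> {}"
proof -
  define f :: "real \<Rightarrow> real set \<Rightarrow> real" where "f r = (\<lambda>_. r)" for r
  define \<omega> :: "real set \<Rightarrow> real" where "\<omega> = indicator {{}}"
  define Y where "Y = alexandroff_discrete (range f) \<omega>"
  have "inj f"
    by (rule injI) (metis f_def)
  have "\<omega> {} \<noteq> \<omega> UNIV"
    by (simp add: \<omega>_def)
  then have "\<omega> \<notin> range f"
    by (auto simp: f_def)
  have "f \<in> K1w euclideanreal Y"
    unfolding Y_def using \<open>inj f\<close> by (rule K1w_alexandroff_discrete) blast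
  moreover have "f \<notin> H1 euclideanreal Y"
  proof
    assume "f \<in> H1 euclideanreal Y"
    then have "fsigma_in euclideanreal (- \<rat>)"
      unfolding Y_def
      by (rule H1_alexandroff_discrete_imp_fsigma_in) (use \<open>inj f\<close> \<open>\<omega> \<notin> range f\<close> in auto)
    with irrationals_not_fsigma_in show False ..
  qed
  moreover have "compact_space Y" "Hausdorff_space Y"
    unfolding Y_def using \<open>\<omega> \<notin> range f\<close>
    by (simp_all add: compact_space_alexandroff_discrete Hausdorff_space_alexandroff_discrete)
  ultimately show ?thesis
    by blast
qed

end
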